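(* Consider the model below and let $\delta:=(M-1)(1-M_f\beta)+\lambda\sigma N$. Then the following holds if and only if $\delta<0$: for every $p,q\in(0,1]$, every $\epsilon_1\in\mathbb{R}$ and every $\epsilon_2\ge0$, there exists exactly one bounded-rationality equilibrium (BRE). Moreover, if $\delta<0$, then for fixed $p,q$, $\epsilon_2\ge0$ and other parameters there exist $\epsilon^{PP,BR}\in\mathbb{R}$ and $\epsilon^{ZP,BR}\in[-\infty,\infty)$ with $\epsilon^{PP,BR}>\epsilon^{ZP,BR}$ such that: (i) the unique BRE is of type PP if and only if $\epsilon_1>\epsilon^{PP,BR}$; (ii) the unique BRE is of type ZP if and only if $\epsilon^{PP,BR}\ge\epsilon_1>\epsilon^{ZP,BR}$; (iii) the unique BRE is of type ZZ if and only if $\epsilon_1\le\epsilon^{ZP,BR}$.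
   Context: Parameters: $0<\beta<1$, $\sigma,\lambda,\mu>0$, $\psi>1$, $M,M_f,N\in(0,1]$. The shock $\epsilon_t$ is a two-state Markov chain on $\{\epsilon_1,\epsilon_2\}$ with $\Pr(\epsilon_{t+1}=\epsilon_1\mid\epsilon_t=\epsilon_1)=p$, $\Pr(\epsilon_{t+1}=\epsilon_2\mid\epsilon_t=\epsilon_2)=q$. Model: $x_t=M E_t x_{t+1}-\sigma(i_t-N E_t\pi_{t+1})+\epsilon_t$, $\pi_t=\lambda x_t+M_f\beta E_t\pi_{t+1}$, $i_t=\max\{\psi\pi_t,-\mu\}$. A BRE is a pair $Y_j=(x_j,\pi_j)$, $j=1,2$, such that for $j=1,2$, with $i_j=\max\{\psi\pi_j,-\mu\}$: $x_j=Mx^e_j-\sigma(i_j-N\pi^e_j)+\epsilon_j$, $\pi_j=\lambda x_j+M_f\beta\pi^e_j$, where $(x^e_1,\pi^e_1)=pY_1+(1-p)Y_2$, $(x^e_2,\pi^e_2)=(1-q)Y_1+qY_2$. Types: the ZLB binds in state $j$ if $\psi\pi_j\le-\mu$. The equilibrium is of type PP if it binds in neither state, ZP if it binds in state 1 only, PZ if it binds in state 2 only, ZZ if it binds in both. *)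

theory Defs
  imports Complex_Main "HOL-Library.Extended_Real"
begin

text \<open>Arguments: beta sigma lam mu psi M Mf N (structural parameters),
  p q (persistence probabilities), e1 e2 (shock values),
  x1 pi1 x2 pi2 (the candidate equilibrium Y_1 = (x1,pi1), Y_2 = (x2,pi2)).\<close>

definition bre ::
  "real \<Rightarrow> real \<Rightarrow> real \<Rightarrow> real \<Rightarrow> real \<Rightarrow> real \<Rightarrow> real \<Rightarrow> real \<Rightarrow>
   real \<Rightarrow> real \<Rightarrow> real \<Rightarrow> real \<Rightarrow> real \<Rightarrow> real \<Rightarrow> real \<Rightarrow> real \<Rightarrow> bool" where
  "bre beta sigma lam mu psi M Mf N p q e1 e2 x1 pi1 x2 pi2 \<longleftrightarrow>
     (let xe1 = p * x1 + (1 - p) * x2;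
          pe1 = p * pi1 + (1 - p) * pi2;
          xe2 = (1 - q) * x1 + q * x2;
          pe2 = (1 - q) * pi1 + q * pi2;
          i1 = max (psi * pi1) (- mu);
          i2 = max (psi * pi2) (- mu)
      in x1 = M * xe1 - sigma * (i1 - N * pe1) + e1
       \<and> pi1 = lam * x1 + Mf * beta * pe1
       \<and> x2 = M * xe2 - sigma * (i2 - N * pe2) + e2
       \<and> pi2 = lam * x2 + Mf * beta * pe2)"

definition zlb_binds :: "real \<Rightarrow> real \<Rightarrow> real \<Rightarrow> bool" where
  "zlb_binds psi mu infl \<longleftrightarrow> psi * infl \<le> - mu"

definition type_PP :: "real \<Rightarrow> real \<Rightarrow> real \<Rightarrow> real \<Rightarrow> bool" where
  "type_PP psi mu pi1 pi2 \<longleftrightarrow> \<not> zlb_binds psi mu pi1 \<and> \<not> zlb_binds psi mu pi2"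

definition type_ZP :: "real \<Rightarrow> real \<Rightarrow> real \<Rightarrow> real \<Rightarrow> bool" where
  "type_ZP psi mu pi1 pi2 \<longleftrightarrow> zlb_binds psi mu pi1 \<and> \<not> zlb_binds psi mu pi2"

definition type_PZ :: "real \<Rightarrow> real \<Rightarrow> real \<Rightarrow> real \<Rightarrow> bool" where
  "type_PZ psi mu pi1 pi2 \<longleftrightarrow> \<not> zlb_binds psi mu pi1 \<and> zlb_binds psi mu pi2"

definition type_ZZ :: "real \<Rightarrow> real \<Rightarrow> real \<Rightarrow> real \<Rightarrow> bool" where
  "type_ZZ psi mu pi1 pi2 \<longleftrightarrow> zlb_binds psi mu pi1 \<and> zlb_binds psi mu pi2"

definition unique_bre ::
  "real \<Rightarrow> real \<Rightarrow> real \<Rightarrow> real \<Rightarrow> real \<Rightarrow> real \<Rightarrow> real \<Rightarrow> real \<Rightarrow>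
   real \<Rightarrow> real \<Rightarrow> real \<Rightarrow> real \<Rightarrow> bool" where
  "unique_bre beta sigma lam mu psi M Mf N p q e1 e2 \<longleftrightarrow>
     (\<exists>!Y :: real \<times> real \<times> real \<times> real.
        bre beta sigma lam mu psi M Mf N p q e1 e2
            (fst Y) (fst (snd Y)) (fst (snd (snd Y))) (snd (snd (snd Y))))"

end

theory Submission
  imports Defs
begin

(* Eliminating the output gaps with the Phillips curves turns a BRE into a solution (u, v) of
   a two-dimensional piecewise-linear system in shifted inflation, where u <= 0 (resp. v <= 0)
   means that the ZLB binds in state 1 (resp. 2).  Its linear part has positive diagonal,
   nonpositive off-diagonal entries and row sums -delta, and the kink adds a nondecreasing
   term.  For delta < 0 this yields a comparison principle, hence uniqueness, and in each
   regime Cramer's rule gives a candidate solution whose regime is decided by the sign of two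
   affine functions of e1; this gives existence and the thresholds.  For delta >= 0 the map
   u -> -delta u + c max 0 u (c = lam sigma psi) is not injective, which gives two BREs when
   p = q = 1. *)

definition kinked_system ::
  "real \<Rightarrow> real \<Rightarrow> real \<Rightarrow> real \<Rightarrow> real \<Rightarrow> real \<Rightarrow> real \<Rightarrow> real \<Rightarrow> bool" where
  "kinked_system D A B c r s u v \<longleftrightarrow>
     (D + A) * u - A * v + c * max 0 u = r \<and> - B * u + (D + B) * v + c * max 0 v = s"

lemma kinked_system_mono:
  fixes D A B c r s r' s' u v u' v' :: real
  assumes coeffs: "0 < D" "0 \<le> A" "0 \<le> B" "0 \<le> c"
    and sol: "kinked_system D A B c r s u v" "kinked_system D A B c r' s' u' v'"
    and "r \<le> r'" "s \<le> s'"
  shows "u \<le> u' \<and> v \<le> v'"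
proof (rule ccontr)
  assume "\<not> (u \<le> u' \<and> v \<le> v')"
  then consider "0 < u - u'" "v - v' \<le> u - u'" | "0 < v - v'" "u - u' \<le> v - v'"
    by linarith
  then show False
  proof cases
    case 1
    then have "0 < D * (u - u') + A * ((u - u') - (v - v')) + c * (max 0 u - max 0 u')"
      using coeffs by (intro add_pos_nonneg mult_pos_pos mult_nonneg_nonneg) auto
    also have "\<dots> = r - r'"
      using sol unfolding kinked_system_def by (simp add: algebra_simps)
    finally show False using \<open>r \<le> r'\<close> by simp
  next
    case 2
    then have "0 < D * (v - v') + B * ((v - v') - (u - u')) + c * (max 0 v - max 0 v')"
      using coeffs by (intro add_pos_nonneg mult_pos_pos mult_nonneg_nonneg) auto
    also have "\<dots> = s - s'"
      using sol unfolding kinked_system_def by (simp add: algebra_simps)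
    finally show False using \<open>s \<le> s'\<close> by simp
  qed
qed

lemma linear_2x2_solution:
  fixes a b A B r s :: real
  assumes "0 \<le> A" "A < a" "0 \<le> B" "B < b"
  obtains u v where "a * u - A * v = r" "- B * u + b * v = s"
    and "0 < u \<longleftrightarrow> 0 < b * r + A * s" and "0 < v \<longleftrightarrow> 0 < a * s + B * r"
proof
  define d where "d = a * b - A * B"
  have "A * B \<le> A * b" using assms by (simp add: mult_left_mono)
  also have "\<dots> < a * b" using assms by (simp add: mult_strict_right_mono)
  finally have "0 < d" by (simp add: d_def)
  have "a * (b * r + A * s) - A * (a * s + B * r) = d * r"
    and "- B * (b * r + A * s) + b * (a * s + B * r) = d * s"
    by (simp_all add: d_def algebra_simps)
  with \<open>0 < d\<close> show "a * ((b * r + A * s) / d) - A * ((a * s + B * r) / d) = r"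
    and "- B * ((b * r + A * s) / d) + b * ((a * s + B * r) / d) = s"
    by (simp_all add: field_simps)
  show "0 < (b * r + A * s) / d \<longleftrightarrow> 0 < b * r + A * s"
    and "0 < (a * s + B * r) / d \<longleftrightarrow> 0 < a * s + B * r"
    using \<open>0 < d\<close> by (simp_all add: zero_less_divide_iff)
qed

lemma second_index_nonpos_imp_first_neg:
  fixes D A B b r s :: real
  assumes "0 < D" "0 \<le> A" "0 \<le> B" "D + B \<le> b" "0 < s" and zz: "(D + A) * s + B * r \<le> 0"
  shows "b * r + A * s < 0"
proof -
  have "0 < (D + A) * s" using assms by simp
  with zz have "0 < B" using \<open>0 \<le> B\<close> by (cases "B = 0") auto
  have "A * B < b * (D + A)"
  proof -
    have "A * B \<le> A * b" using assms by (simp add: mult_left_mono)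
    also have "\<dots> < (D + A) * b" using assms \<open>0 < B\<close> by (simp add: mult_strict_right_mono)
    finally show ?thesis by (simp add: mult.commute)
  qed
  have "B * (b * r + A * s) = b * ((D + A) * s + B * r) - (b * (D + A) - A * B) * s"
    by (simp add: algebra_simps)
  also have "\<dots> < 0"
  proof -
    have "b * ((D + A) * s + B * r) \<le> 0"
      using zz assms by (simp add: mult_nonneg_nonpos)
    moreover have "0 < (b * (D + A) - A * B) * s"
      using \<open>A * B < b * (D + A)\<close> assms by simp
    ultimately show ?thesis by linarith
  qed
  finally show ?thesis using \<open>0 < B\<close> by (simp add: mult_less_0_iff)
qed

(* The regime is read off from r and s: u has the sign of (D + B + c) r + A s whether v is
   slack or binding, and v has the sign of (D + A) s + B r whether u is binding or not. *)
lemma kinked_system_solution: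
  fixes D A B c r s :: real
  assumes coeffs: "0 < D" "0 \<le> A" "0 \<le> B" "0 \<le> c" and "0 < s"
  obtains u v where "kinked_system D A B c r s u v"
    and "0 < u \<longleftrightarrow> 0 < (D + B + c) * r + A * s"
    and "v \<le> 0 \<longleftrightarrow> (D + A) * s + B * r \<le> 0"
proof -
  consider (PP) "0 < (D + B + c) * r + A * s"
    | (ZP) "(D + B + c) * r + A * s \<le> 0" "0 < (D + A) * s + B * r"
    | (ZZ) "(D + A) * s + B * r \<le> 0"
    by linarith
  then show thesis
  proof cases
    case PP
    have v_index: "0 < (D + A) * s + B * r"
      using second_index_nonpos_imp_first_neg[of D A B "D + B + c" s r] PP coeffs \<open>0 < s\<close>
      by force
    moreover have "0 \<le> c * s"
      using coeffs \<open>0 < s\<close> by simp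
    ultimately have "0 < (D + A + c) * s + B * r"
      by (simp add: algebra_simps)
    moreover obtain u v where "(D + A + c) * u - A * v = r" "- B * u + (D + B + c) * v = s"
      and "0 < u \<longleftrightarrow> 0 < (D + B + c) * r + A * s"
      and "0 < v \<longleftrightarrow> 0 < (D + A + c) * s + B * r"
      using linear_2x2_solution[of A "D + A + c" B "D + B + c" r s] coeffs by auto
    ultimately show thesis
      using that[of u v] PP v_index by (auto simp: kinked_system_def algebra_simps)
  next
    case ZP
    obtain u v where "(D + A) * u - A * v = r" "- B * u + (D + B + c) * v = s"
      and "0 < u \<longleftrightarrow> 0 < (D + B + c) * r + A * s"
      and "0 < v \<longleftrightarrow> 0 < (D + A) * s + B * r"
      using linear_2x2_solution[of A "D + A" B "D + B + c" r s] coeffs by auto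
    then show thesis
      using that[of u v] ZP by (auto simp: kinked_system_def algebra_simps)
  next
    case ZZ
    then have "(D + B + c) * r + A * s < 0" "(D + B) * r + A * s < 0"
      using second_index_nonpos_imp_first_neg[of D A B _ s r] coeffs \<open>0 < s\<close> by auto
    moreover obtain u v where "(D + A) * u - A * v = r" "- B * u + (D + B) * v = s"
      and "0 < u \<longleftrightarrow> 0 < (D + B) * r + A * s"
      and "0 < v \<longleftrightarrow> 0 < (D + A) * s + B * r"
      using linear_2x2_solution[of A "D + A" B "D + B" r s] coeffs by auto
    ultimately show thesis
      using that[of u v] ZZ by (auto simp: kinked_system_def algebra_simps)
  qed
qed

lemma kinked_system_signs:
  fixes D A B c r s u v :: real
  assumes coeffs: "0 < D" "0 \<le> A" "0 \<le> B" "0 \<le> c" and "0 < s"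
    and "kinked_system D A B c r s u v"
  shows "0 < u \<longleftrightarrow> 0 < (D + B + c) * r + A * s"
    and "v \<le> 0 \<longleftrightarrow> (D + A) * s + B * r \<le> 0"
proof -
  obtain u' v' where "kinked_system D A B c r s u' v'"
    and "0 < u' \<longleftrightarrow> 0 < (D + B + c) * r + A * s"
    and "v' \<le> 0 \<longleftrightarrow> (D + A) * s + B * r \<le> 0"
    using kinked_system_solution[OF assms(1-5)] .
  moreover have "u = u' \<and> v = v'"
    using kinked_system_mono[OF coeffs] assms(6) \<open>kinked_system D A B c r s u' v'\<close>
    by (meson order.antisym order.refl)
  ultimately show "0 < u \<longleftrightarrow> 0 < (D + B + c) * r + A * s"
    and "v \<le> 0 \<longleftrightarrow> (D + A) * s + B * r \<le> 0" by simp_all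
qed

lemma kinked_system_unique_solution:
  fixes D A B c r s :: real
  assumes coeffs: "0 < D" "0 \<le> A" "0 \<le> B" "0 \<le> c" and "0 < s"
  shows "\<exists>!w. kinked_system D A B c r s (fst w) (snd w)"
proof -
  obtain u v where "kinked_system D A B c r s u v"
    using kinked_system_solution[OF assms] .
  then show ?thesis
    using kinked_system_mono[OF coeffs]
    by (intro ex1I[of _ "(u, v)"]) (auto intro: prod_eqI order.antisym)
qed

lemma affine_thresholds:
  fixes a b c d :: real
  assumes "0 < a" "0 \<le> c" and zz_imp_pp: "\<And>x. c * x + d \<le> 0 \<Longrightarrow> a * x + b < 0"
  obtains t1 :: real and t2 :: ereal where "t2 \<noteq> \<infinity>" "t2 < ereal t1"
    and "\<And>x. 0 < a * x + b \<longleftrightarrow> t1 < x"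
    and "\<And>x. c * x + d \<le> 0 \<longleftrightarrow> ereal x \<le> t2"
proof -
  have pp: "0 < a * x + b \<longleftrightarrow> - b / a < x" for x
    using \<open>0 < a\<close> by (auto simp: field_simps)
  show thesis
  proof (cases "c = 0")
    case True
    have "0 < d"
      using zz_imp_pp[of "- b / a"] \<open>0 < a\<close> True by (cases "d \<le> 0") auto
    then show thesis
      using that[of "-\<infinity>" "- b / a"] pp True by simp
  next
    case False
    with \<open>0 \<le> c\<close> have "0 < c" by simp
    then have zz: "c * x + d \<le> 0 \<longleftrightarrow> x \<le> - d / c" for x
      by (auto simp: field_simps)
    have "a * (- d / c) + b < 0"
      using zz_imp_pp[of "- d / c"] \<open>0 < c\<close> by simp
    then have "- d / c < - b / a"
      using \<open>0 < a\<close> by (simp add: field_simps)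
    then show thesis
      using that[of "ereal (- d / c)" "- b / a"] pp zz by simp
  qed
qed

lemma Ex1_image_inj:
  assumes "inj f"
  shows "(\<exists>!y. \<exists>x. P x \<and> y = f x) \<longleftrightarrow> (\<exists>!x. P x)"
  using injD[OF assms] by blast

lemma zlb_binds_iff:
  fixes psi mu infl :: real
  assumes "0 < psi"
  shows "zlb_binds psi mu infl \<longleftrightarrow> infl + mu / psi \<le> 0"
  using assms by (auto simp: zlb_binds_def field_simps)

lemma max_shift:
  fixes psi mu t :: real
  assumes "0 < psi"
  shows "max (psi * t) (- mu) = psi * max 0 (t + mu / psi) - mu"
  using assms by (simp add: max_def field_simps)

locale bre_model =
  fixes beta sigma lam mu psi M Mf N :: real
  assumes beta: "0 < beta" "beta < 1" and sigma: "0 < sigma" and lam: "0 < lam"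
    and mu: "0 < mu" and psi: "1 < psi"
    and M: "0 < M" "M \<le> 1" and Mf: "0 < Mf" "Mf \<le> 1" and N: "0 < N" "N \<le> 1"
begin

definition delta :: real where
  "delta = (M - 1) * (1 - Mf * beta) + lam * sigma * N"

definition coupling :: "real \<Rightarrow> real \<Rightarrow> real" where
  "coupling p q = M + Mf * beta + lam * sigma * N - M * Mf * beta * (p + q)"

definition forcing :: "real \<Rightarrow> real" where
  "forcing e = lam * e - delta * mu / psi + lam * sigma * mu"

(* Its unknowns are pi1 + mu / psi and pi2 + mu / psi, so the ZLB binds in a state iff the
   corresponding unknown is nonpositive (zlb_binds_iff). *)
abbreviation inflation_system :: "real \<Rightarrow> real \<Rightarrow> real \<Rightarrow> real \<Rightarrow> real \<Rightarrow> real \<Rightarrow> bool" where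
  "inflation_system p q e1 e2 \<equiv>
     kinked_system (- delta) ((1 - p) * coupling p q) ((1 - q) * coupling p q) (lam * sigma * psi)
       (forcing e1) (forcing e2)"

lemma bre_iff_inflation_system:
  "bre beta sigma lam mu psi M Mf N p q e1 e2 x1 pi1 x2 pi2 \<longleftrightarrow>
     lam * x1 = pi1 - Mf * beta * (p * pi1 + (1 - p) * pi2) \<and>
     lam * x2 = pi2 - Mf * beta * ((1 - q) * pi1 + q * pi2) \<and>
     inflation_system p q e1 e2 (pi1 + mu / psi) (pi2 + mu / psi)"
proof -
  let ?pe1 = "p * pi1 + (1 - p) * pi2" and ?pe2 = "(1 - q) * pi1 + q * pi2"
  let ?u1 = "pi1 + mu / psi" and ?u2 = "pi2 + mu / psi"
  let ?A = "(1 - p) * coupling p q" and ?B = "(1 - q) * coupling p q" and ?c = "lam * sigma * psi"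
  have policy_rate: "max (psi * pi1) (- mu) = psi * max 0 ?u1 - mu"
    "max (psi * pi2) (- mu) = psi * max 0 ?u2 - mu"
    using psi by (simp_all add: max_shift)
  have "x1 = M * (p * x1 + (1 - p) * x2) - sigma * (max (psi * pi1) (- mu) - N * ?pe1) + e1
        \<longleftrightarrow> (- delta + ?A) * ?u1 - ?A * ?u2 + ?c * max 0 ?u1 = forcing e1"
    and "x2 = M * ((1 - q) * x1 + q * x2) - sigma * (max (psi * pi2) (- mu) - N * ?pe2) + e2
        \<longleftrightarrow> - ?B * ?u1 + (- delta + ?B) * ?u2 + ?c * max 0 ?u2 = forcing e2"
    if "lam * x1 = pi1 - Mf * beta * ?pe1" and "lam * x2 = pi2 - Mf * beta * ?pe2"
  proof -
    have "lam * (x1 - (M * (p * x1 + (1 - p) * x2) - sigma * (max (psi * pi1) (- mu) - N * ?pe1) + e1))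
        = (- delta + ?A) * ?u1 - ?A * ?u2 + ?c * max 0 ?u1 - forcing e1"
      and "lam * (x2 - (M * ((1 - q) * x1 + q * x2) - sigma * (max (psi * pi2) (- mu) - N * ?pe2) + e2))
        = - ?B * ?u1 + (- delta + ?B) * ?u2 + ?c * max 0 ?u2 - forcing e2"
      unfolding policy_rate delta_def coupling_def forcing_def using that psi by algebra+
    then show "x1 = M * (p * x1 + (1 - p) * x2) - sigma * (max (psi * pi1) (- mu) - N * ?pe1) + e1
        \<longleftrightarrow> (- delta + ?A) * ?u1 - ?A * ?u2 + ?c * max 0 ?u1 = forcing e1"
      and "x2 = M * ((1 - q) * x1 + q * x2) - sigma * (max (psi * pi2) (- mu) - N * ?pe2) + e2
        \<longleftrightarrow> - ?B * ?u1 + (- delta + ?B) * ?u2 + ?c * max 0 ?u2 = forcing e2"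
      using lam by auto
  qed
  moreover have "y = lam * x + z \<longleftrightarrow> lam * x = y - z" for x y z :: real
    by auto
  ultimately show ?thesis
    unfolding bre_def Let_def kinked_system_def by blast
qed

lemma coupling_pos:
  assumes "p \<le> 1" "q \<le> 1"
  shows "0 < coupling p q"
proof -
  have "0 < Mf * beta" "Mf * beta < 1"
    using Mf beta mult_le_less_imp_less[of Mf 1 beta 1] by auto
  then have "0 \<le> M * (1 - Mf * beta) + Mf * beta * (1 - M) + M * (Mf * beta) * (2 - p - q)"
    using M assms by simp
  moreover have "0 < lam * sigma * N"
    using lam sigma N by simp
  ultimately show ?thesis
    unfolding coupling_def by (simp add: algebra_simps)
qed

lemma unique_bre_iff:
  "unique_bre beta sigma lam mu psi M Mf N p q e1 e2 \<longleftrightarrow>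
     (\<exists>!w. inflation_system p q e1 e2 (fst w) (snd w))"
proof -
  define bre_of :: "real \<times> real \<Rightarrow> real \<times> real \<times> real \<times> real" where
    "bre_of w = (let pi1 = fst w - mu / psi; pi2 = snd w - mu / psi in
       ((pi1 - Mf * beta * (p * pi1 + (1 - p) * pi2)) / lam, pi1,
        (pi2 - Mf * beta * ((1 - q) * pi1 + q * pi2)) / lam, pi2))" for w
  let ?bre = "\<lambda>Y. bre beta sigma lam mu psi M Mf N p q e1 e2
                 (fst Y) (fst (snd Y)) (fst (snd (snd Y))) (snd (snd (snd Y)))"
  let ?sys = "\<lambda>w. inflation_system p q e1 e2 (fst w) (snd w)"
  have bre_iff_bre_of: "?bre Y \<longleftrightarrow> (\<exists>w. ?sys w \<and> Y = bre_of w)" for Y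
    using lam unfolding bre_iff_inflation_system
    by (cases Y) (auto simp: bre_of_def Let_def field_simps)
  have "inj bre_of"
    by (rule injI) (auto simp: bre_of_def Let_def prod_eq_iff)
  then show ?thesis
    unfolding unique_bre_def bre_iff_bre_of by (rule Ex1_image_inj)
qed

lemma kink_slope_gt_delta: "delta < lam * sigma * psi"
proof -
  have "Mf * beta \<le> 1"
    using Mf beta mult_le_one[of Mf beta] by simp
  then have "delta \<le> lam * sigma * N"
    using M unfolding delta_def by (simp add: mult_nonpos_nonneg)
  also have "\<dots> \<le> lam * sigma"
    using lam sigma N by (simp add: mult_left_le)
  also have "\<dots> < lam * sigma * psi"
    using lam sigma psi by simp
  finally show ?thesis .
qed

lemma forcing_pos:
  assumes "delta < 0" "0 \<le> e"
  shows "0 < forcing e"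
proof -
  have "delta * mu / psi < 0" "0 < lam * sigma * mu"
    using assms lam sigma mu psi by (simp_all add: divide_neg_pos mult_neg_pos)
  moreover have "0 \<le> lam * e"
    using assms lam by simp
  ultimately show ?thesis
    unfolding forcing_def by simp
qed

lemma unique_bre_if_delta_neg:
  assumes "delta < 0" "p \<le> 1" "q \<le> 1" "0 \<le> e2"
  shows "unique_bre beta sigma lam mu psi M Mf N p q e1 e2"
  unfolding unique_bre_iff
proof (rule kinked_system_unique_solution)
  show "0 < - delta" "0 \<le> (1 - p) * coupling p q" "0 \<le> (1 - q) * coupling p q"
    "0 \<le> lam * sigma * psi" "0 < forcing e2"
    using assms coupling_pos[of p q] forcing_pos[of e2] lam sigma psi by simp_all
qed

(* For p = q = 1 the states decouple, and state 1 reads - delta u + c max 0 u = forcing e1.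
   Its left side does not increase for u <= 0, so forcing e1 = delta has the roots -1 and
   delta / (c - delta). *)
lemma not_unique_bre_if_delta_nonneg:
  assumes "0 \<le> delta"
  shows "\<exists>e1. \<not> unique_bre beta sigma lam mu psi M Mf N 1 1 e1 0"
proof
  let ?c = "lam * sigma * psi"
  define e1 where "e1 = (delta + delta * mu / psi - lam * sigma * mu) / lam"
  have "forcing e1 = delta"
    using lam unfolding e1_def forcing_def by (simp add: field_simps)
  then have sys: "inflation_system 1 1 e1 0 u (mu / psi) \<longleftrightarrow>
      - delta * u + ?c * max 0 u = delta" for u
    using mu psi unfolding kinked_system_def forcing_def by (simp add: field_simps)
  define u where "u = delta / (?c - delta)"
  have "0 < ?c - delta"
    using kink_slope_gt_delta by simp
  then have "0 \<le> u" "(?c - delta) * u = delta"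
    using assms unfolding u_def by simp_all
  then have "inflation_system 1 1 e1 0 u (mu / psi)"
    unfolding sys by (simp add: algebra_simps)
  moreover have "inflation_system 1 1 e1 0 (-1) (mu / psi)"
    unfolding sys by simp
  moreover have "u \<noteq> -1"
    using \<open>0 \<le> u\<close> by linarith
  ultimately show "\<not> unique_bre beta sigma lam mu psi M Mf N 1 1 e1 0"
    unfolding unique_bre_iff by (metis fst_conv snd_conv)
qed

lemma bre_type_thresholds:
  assumes "delta < 0" "p \<le> 1" "q \<le> 1" "0 \<le> e2"
  shows "\<exists>(ePP :: real) (eZP :: ereal). eZP \<noteq> \<infinity> \<and> eZP < ereal ePP \<and>
    (\<forall>e1 x1 pi1 x2 pi2. bre beta sigma lam mu psi M Mf N p q e1 e2 x1 pi1 x2 pi2 \<longrightarrow>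
         (type_PP psi mu pi1 pi2 \<longleftrightarrow> ePP < e1)
       \<and> (type_ZP psi mu pi1 pi2 \<longleftrightarrow> e1 \<le> ePP \<and> eZP < ereal e1)
       \<and> (type_ZZ psi mu pi1 pi2 \<longleftrightarrow> ereal e1 \<le> eZP))"
proof -
  define D A B c s where "D = - delta" and "A = (1 - p) * coupling p q"
    and "B = (1 - q) * coupling p q" and "c = lam * sigma * psi" and "s = forcing e2"
  have coeffs: "0 < D" "0 \<le> A" "0 \<le> B" "0 \<le> c" "0 < s"
    using assms coupling_pos[of p q] forcing_pos[of e2] lam sigma psi
    unfolding D_def A_def B_def c_def s_def by simp_all
  define f0 where "f0 = forcing 0"
  have forcing_affine: "forcing e = lam * e + f0" for e
    by (simp add: forcing_def f0_def)
  have "0 < (D + B + c) * lam" "0 \<le> B * lam"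
    using coeffs lam by simp_all
  moreover have "(B * lam) * e + ((D + A) * s + B * f0) \<le> 0 \<Longrightarrow>
      ((D + B + c) * lam) * e + ((D + B + c) * f0 + A * s) < 0" for e
    using second_index_nonpos_imp_first_neg[OF coeffs(1-3) _ coeffs(5), of "D + B + c" "forcing e"]
      coeffs(4)
    by (simp add: forcing_affine algebra_simps)
  ultimately obtain t1 t2 where t: "t2 \<noteq> \<infinity>" "t2 < ereal t1"
    and pp: "\<And>e. 0 < ((D + B + c) * lam) * e + ((D + B + c) * f0 + A * s) \<longleftrightarrow> t1 < e"
    and zz: "\<And>e. (B * lam) * e + ((D + A) * s + B * f0) \<le> 0 \<longleftrightarrow> ereal e \<le> t2"
    by (rule affine_thresholds) auto
  have "(type_PP psi mu pi1 pi2 \<longleftrightarrow> t1 < e1)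
      \<and> (type_ZP psi mu pi1 pi2 \<longleftrightarrow> e1 \<le> t1 \<and> t2 < ereal e1)
      \<and> (type_ZZ psi mu pi1 pi2 \<longleftrightarrow> ereal e1 \<le> t2)"
    if "bre beta sigma lam mu psi M Mf N p q e1 e2 x1 pi1 x2 pi2" for e1 x1 pi1 x2 pi2
  proof -
    have sol: "kinked_system D A B c (forcing e1) s (pi1 + mu / psi) (pi2 + mu / psi)"
      using that unfolding bre_iff_inflation_system D_def A_def B_def c_def s_def by simp
    have "0 < pi1 + mu / psi \<longleftrightarrow> t1 < e1"
      using kinked_system_signs(1)[OF coeffs sol] pp[of e1] by (simp add: forcing_affine algebra_simps)
    moreover have "pi2 + mu / psi \<le> 0 \<longleftrightarrow> ereal e1 \<le> t2"
      using kinked_system_signs(2)[OF coeffs sol] zz[of e1] by (simp add: forcing_affine algebra_simps)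
    moreover have "ereal e1 \<le> t2 \<Longrightarrow> e1 < t1"
      using le_less_trans[OF _ t(2), of "ereal e1"] by simp
    ultimately show ?thesis
      using psi unfolding type_PP_def type_ZP_def type_ZZ_def by (auto simp: zlb_binds_iff not_le)
  qed
  with t show ?thesis
    by blast
qed

lemma unique_bre_iff_delta_neg:
  "delta < 0 \<longleftrightarrow>
     (\<forall>p q e1 e2. 0 < p \<and> p \<le> 1 \<and> 0 < q \<and> q \<le> 1 \<and> 0 \<le> e2 \<longrightarrow>
        unique_bre beta sigma lam mu psi M Mf N p q e1 e2)"
proof
  assume "delta < 0"
  then show "\<forall>p q e1 e2. 0 < p \<and> p \<le> 1 \<and> 0 < q \<and> q \<le> 1 \<and> 0 \<le> e2 \<longrightarrow>
      unique_bre beta sigma lam mu psi M Mf N p q e1 e2"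
    using unique_bre_if_delta_neg by simp
next
  assume unique: "\<forall>p q e1 e2. 0 < p \<and> p \<le> 1 \<and> 0 < q \<and> q \<le> 1 \<and> 0 \<le> e2 \<longrightarrow>
      unique_bre beta sigma lam mu psi M Mf N p q e1 e2"
  show "delta < 0"
  proof (rule ccontr)
    assume "\<not> delta < 0"
    then obtain e1 where "\<not> unique_bre beta sigma lam mu psi M Mf N 1 1 e1 0"
      using not_unique_bre_if_delta_nonneg by auto
    with unique show False
      by auto
  qed
qed

end

theorem proposition5:
  fixes beta sigma lam mu psi M Mf N :: real
  assumes "0 < beta" "beta < 1" "0 < sigma" "0 < lam" "0 < mu" "1 < psi"
    and "0 < M" "M \<le> 1" "0 < Mf" "Mf \<le> 1" "0 < N" "N \<le> 1"
  defines "delta \<equiv> (M - 1) * (1 - Mf * beta) + lam * sigma * N"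
  shows "(delta < 0 \<longleftrightarrow>
           (\<forall>p q e1 e2 :: real. 0 < p \<and> p \<le> 1 \<and> 0 < q \<and> q \<le> 1 \<and> 0 \<le> e2 \<longrightarrow>
              unique_bre beta sigma lam mu psi M Mf N p q e1 e2))
       \<and> (delta < 0 \<longrightarrow>
           (\<forall>p q e2 :: real. 0 < p \<and> p \<le> 1 \<and> 0 < q \<and> q \<le> 1 \<and> 0 \<le> e2 \<longrightarrow>
              (\<exists>(ePP :: real) (eZP :: ereal). eZP \<noteq> \<infinity> \<and> eZP < ereal ePP \<and>
                 (\<forall>e1 x1 pi1 x2 pi2.
                    bre beta sigma lam mu psi M Mf N p q e1 e2 x1 pi1 x2 pi2 \<longrightarrow>
                      (type_PP psi mu pi1 pi2 \<longleftrightarrow> ePP < e1)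
                    \<and> (type_ZP psi mu pi1 pi2 \<longleftrightarrow> e1 \<le> ePP \<and> eZP < ereal e1)
                    \<and> (type_ZZ psi mu pi1 pi2 \<longleftrightarrow> ereal e1 \<le> eZP)))))"
proof -
  interpret m: bre_model beta sigma lam mu psi M Mf N
    using assms by unfold_locales
  have "delta = m.delta"
    unfolding delta_def m.delta_def ..
  then show ?thesis
    using m.unique_bre_iff_delta_neg m.bre_type_thresholds by simp
qed

end
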